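(* Let $\widetilde\gamma$ be a Kähler metric on $\widetilde M_2$ (with respect to the complex structure inherited from $\mathbb{H}^2\times\mathbb{H}^2$) which is invariant under the group $G=PL(2,\mathbb{R})\times\{\mathrm{Id},P\}$. Then there exists a smooth function $A:(0,\infty)\to\mathbb{R}$ such that $$\widetilde\gamma=A_1(s)\,ds^2+A_2(s)\,\sigma_1^2+A_3(s)\,\sigma_2^2+A_4(s)\,\sigma_3^2,$$ where $$A_1=\frac{1}{8\sinh(s/2)}\frac{d}{ds}\Big(\frac{A(s)}{\cosh(s/2)}\Big),\quad A_2=A(s),\quad A_3=2\sinh(s/2)\frac{d}{ds}\Big(\frac{A(s)}{\cosh(s/2)}\Big),\quad A_4=\frac{A(s)}{\cosh^2(s/2)}.$$
   Context: $\mathbb{H}^2=\{x+iy\in\mathbb{C}:y>0\}$ is the upper half plane. $\widetilde M_2=\mathbb{H}^2\times\mathbb{H}^2\setminus\{(z,z):z\in\mathbb{H}^2\}$, a complex manifold with coordinates $(z_1,z_2)$. $PL(2,\mathbb{R})$ denotes the group of real $2\times2$ matrices of positive determinant modulo nonzero scalars (equivalently $SL(2,\mathbb{R})/\{\pm I\}$), acting on $\mathbb{H}^2$ by $M\odot z=(az+b)/(cz+d)$ for $M=\begin{pmatrix}a&b\\c&d\end{pmatrix}$, and on $\widetilde M_2$ diagonally: $(z_1,z_2)\mapsto(M\odot z_1,M\odot z_2)$. $P:(z_1,z_2)\mapsto(z_2,z_1)$. For $s>0$ put $w_s=(ie^{s/2},ie^{-s/2})$; the map $(0,\infty)\times PL(2,\mathbb{R})\to\widetilde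 M_2$, $(s,g)\mapsto g\cdot w_s$, is a diffeomorphism, and we use $(s,g)$ as coordinates. Let $e_1=\begin{pmatrix}0&1\\1&0\end{pmatrix}$, $e_2=\begin{pmatrix}0&1\\-1&0\end{pmatrix}$, $e_3=\begin{pmatrix}1&0\\0&-1\end{pmatrix}$ be a basis of the Lie algebra of $PL(2,\mathbb{R})$, and let $\sigma_1,\sigma_2,\sigma_3$ be the left-invariant 1-forms on $PL(2,\mathbb{R})$ dual to the corresponding left-invariant vector fields, pulled back to $\widetilde M_2$ via the coordinates $(s,g)$. Juxtaposition of 1-forms means symmetric tensor product. *)

theory Defs
  imports "HOL-Analysis.Analysis"
begin

fun Ck_on :: "nat \<Rightarrow> 'a::euclidean_space set \<Rightarrow> ('a \<Rightarrow> real) \<Rightarrow> bool" where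
  "Ck_on 0 S f = continuous_on S f"
| "Ck_on (Suc k) S f =
     ((\<forall>x\<in>S. f differentiable (at x)) \<and>
      (\<forall>i\<in>Basis. Ck_on k S (\<lambda>x. frechet_derivative f (at x) i)))"

definition smooth_on :: "'a::euclidean_space set \<Rightarrow> ('a \<Rightarrow> real) \<Rightarrow> bool" where
  "smooth_on S f \<longleftrightarrow> (\<forall>k. Ck_on k S f)"

definition H2 :: "complex set" where
  "H2 = {z. Im z > 0}"

definition M2 :: "(complex \<times> complex) set" where
  "M2 = {(z1, z2). z1 \<in> H2 \<and> z2 \<in> H2 \<and> z1 \<noteq> z2}"

definition mob :: "real^2^2 \<Rightarrow> complex \<Rightarrow> complex" where
  "mob M z = (of_real (M$1$1) * z + of_real (M$1$2)) / (of_real (M$2$1) * z + of_real (M$2$2))"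

definition act :: "real^2^2 \<Rightarrow> complex \<times> complex \<Rightarrow> complex \<times> complex" where
  "act M p = (mob M (fst p), mob M (snd p))"

definition swapP :: "complex \<times> complex \<Rightarrow> complex \<times> complex" where
  "swapP p = (snd p, fst p)"

text \<open>Complex structure inherited from H2 x H2.\<close>
definition Jc :: "complex \<times> complex \<Rightarrow> complex \<times> complex" where
  "Jc u = (\<i> * fst u, \<i> * snd u)"

text \<open>A metric tensor field: at each point a real bilinear form on the tangent space C x C.\<close>
definition riemannian_metric :: "(complex \<times> complex) set \<Rightarrow>
    (complex \<times> complex \<Rightarrow> complex \<times> complex \<Rightarrow> complex \<times> complex \<Rightarrow> real) \<Rightarrow> bool" where
  "riemannian_metric S g \<longleftrightarrow>
     (\<forall>p\<in>S. bilinear (g p)) \<and>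
     (\<forall>p\<in>S. \<forall>u v. g p u v = g p v u) \<and>
     (\<forall>p\<in>S. \<forall>u. u \<noteq> 0 \<longrightarrow> g p u u > 0) \<and>
     (\<forall>b\<in>Basis. \<forall>b'\<in>Basis. smooth_on S (\<lambda>p. g p b b'))"

text \<open>Kaehler form omega(u,v) = g(Ju,v), and exterior derivative of a 2-form
  evaluated on constant vector fields (whose brackets vanish).\<close>
definition kform where
  "kform g p u v = g p (Jc u) v"

definition d2form ::
  "(complex \<times> complex \<Rightarrow> complex \<times> complex \<Rightarrow> complex \<times> complex \<Rightarrow> real) \<Rightarrow>
   complex \<times> complex \<Rightarrow> complex \<times> complex \<Rightarrow> complex \<times> complex \<Rightarrow> complex \<times> complex \<Rightarrow> real" where
  "d2form w p u v x =
     frechet_derivative (\<lambda>q. w q v x) (at p) u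
   + frechet_derivative (\<lambda>q. w q x u) (at p) v
   + frechet_derivative (\<lambda>q. w q u v) (at p) x"

definition kaehler_metric :: "(complex \<times> complex) set \<Rightarrow>
    (complex \<times> complex \<Rightarrow> complex \<times> complex \<Rightarrow> complex \<times> complex \<Rightarrow> real) \<Rightarrow> bool" where
  "kaehler_metric S g \<longleftrightarrow>
     riemannian_metric S g \<and>
     (\<forall>p\<in>S. \<forall>u v. g p (Jc u) (Jc v) = g p u v) \<and>
     (\<forall>p\<in>S. \<forall>u v x. d2form (kform g) p u v x = 0)"

text \<open>Invariance under G = PL(2,R) x {Id, P}: pullback of g under each group element
  equals g. PL(2,R) is represented by real matrices of positive determinant.\<close>
definition G_invariant ::
  "(complex \<times> complex \<Rightarrow> complex \<times> complex \<Rightarrow> complex \<times> complex \<Rightarrow> real) \<Rightarrow> bool" where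
  "G_invariant g \<longleftrightarrow>
     (\<forall>M::real^2^2. det M > 0 \<longrightarrow> (\<forall>p\<in>M2. \<forall>u v.
        g (act M p) (frechet_derivative (act M) (at p) u) (frechet_derivative (act M) (at p) v)
        = g p u v)) \<and>
     (\<forall>p\<in>M2. \<forall>u v. g (swapP p) (swapP u) (swapP v) = g p u v)"

definition wpt :: "real \<Rightarrow> complex \<times> complex" where
  "wpt s = (\<i> * of_real (exp (s/2)), \<i> * of_real (exp (-s/2)))"

definition Phi :: "real \<Rightarrow> real^2^2 \<Rightarrow> complex \<times> complex" where
  "Phi s M = act M (wpt s)"

definition e1 :: "real^2^2" where "e1 = vector [vector [0, 1], vector [1, 0]]"
definition e2 :: "real^2^2" where "e2 = vector [vector [0, 1], vector [-1, 0]]"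
definition e3 :: "real^2^2" where "e3 = vector [vector [1, 0], vector [0, -1]]"

text \<open>Image under d Phi at (s,M) of the tangent vector tau d/ds + a X1 + b X2 + c X3,
  where Xi is the left-invariant vector field generated by ei (its value at M is M ** ei).
  Hence ds, sigma1, sigma2, sigma3 evaluate on it to tau, a, b, c.\<close>
definition dPhi :: "real \<Rightarrow> real^2^2 \<Rightarrow> real \<Rightarrow> real \<Rightarrow> real \<Rightarrow> real \<Rightarrow> complex \<times> complex" where
  "dPhi s M tau a b c =
     vector_derivative
       (\<lambda>t. Phi (s + t * tau) (M ** (mat 1 + t *\<^sub>R (a *\<^sub>R e1 + b *\<^sub>R e2 + c *\<^sub>R e3)))) (at 0)"

end

theory Submission
  imports Defs
begin

(* Every point of M2 is g . w_s for some s > 0 and g in PL(2,R), so by PL(2,R)-invariance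
   the metric gamma is determined by its values at the points w_s, and the coordinate
   tangent vectors dPhi are pushed to w_s by the differential of the Moebius action.
   At w_s we use the frame E1, J E1, E2, J E2.  J-invariance together with the symmetry
   (z1,z2) -> (-1/z2, -1/z1) (rotation by 90 degrees followed by the swap P), which fixes
   w_s, shows that gamma(w_s) is diagonal in this frame with only two coefficients
   alpha(s) and beta(s).  Closedness of the Kaehler form, evaluated on three coordinate
   tangent vectors, yields the ODE  2 (u + 1/u) alpha' + (u - 1/u) (alpha - beta) = 0
   with u = exp(s/2); with A = 4 cosh^2(s/2) alpha this says exactly that
   d/ds (A / cosh(s/2)) = 2 sinh(s/2) beta, which is the claimed form of gamma. *)

section \<open>Smoothness calculus for real functions\<close>

lemma has_derivative_cong_open:
  assumes "open S" "x \<in> S" "\<And>y. y \<in> S \<Longrightarrow> f y = g y"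
  shows "(f has_derivative f') (at x) \<longleftrightarrow> (g has_derivative f') (at x)"
proof
  assume "(f has_derivative f') (at x)"
  then show "(g has_derivative f') (at x)"
    by (rule has_derivative_transform_within_open[OF _ assms(1,2)]) (simp add: assms(3))
next
  assume "(g has_derivative f') (at x)"
  then show "(f has_derivative f') (at x)"
    by (rule has_derivative_transform_within_open[OF _ assms(1,2)]) (simp add: assms(3))
qed

lemma frechet_derivative_cong_open:
  assumes "open S" "x \<in> S" "\<And>y. y \<in> S \<Longrightarrow> f y = g y"
  shows "frechet_derivative f (at x) = frechet_derivative g (at x)"
  unfolding frechet_derivative_def using has_derivative_cong_open[OF assms] by simp

lemma differentiable_cong_open:
  assumes "open S" "x \<in> S" "\<And>y. y \<in> S \<Longrightarrow> f y = g y"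
  shows "f differentiable (at x) \<longleftrightarrow> g differentiable (at x)"
  unfolding differentiable_def using has_derivative_cong_open[OF assms] by simp

lemma Ck_on_cong:
  assumes "open S" "\<And>y. y \<in> S \<Longrightarrow> f y = g y"
  shows "Ck_on k S f = Ck_on k S g"
  using assms(2)
proof (induction k arbitrary: f g)
  case 0
  have "continuous_on S f = continuous_on S g"
    by (rule continuous_on_cong[OF refl]) (simp add: 0)
  then show ?case by simp
next
  case (Suc k)
  have diff: "(\<forall>x\<in>S. f differentiable (at x)) = (\<forall>x\<in>S. g differentiable (at x))"
    using differentiable_cong_open[OF assms(1)] Suc.prems by blast
  have deriv: "Ck_on k S (\<lambda>x. frechet_derivative f (at x) i)
             = Ck_on k S (\<lambda>x. frechet_derivative g (at x) i)" for i
    by (rule Suc.IH) (simp add: frechet_derivative_cong_open[OF assms(1) _ Suc.prems])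
  show ?case by (simp only: Ck_on.simps diff deriv)
qed

lemma Ck_on_Suc_imp_Ck_on: "Ck_on (Suc k) S f \<Longrightarrow> Ck_on k S f"
proof (induction k arbitrary: f)
  case 0
  then show ?case
    by (simp add: continuous_at_imp_continuous_on differentiable_imp_continuous_within)
next
  case (Suc k)
  then show ?case by auto
qed

lemma real_DERIV_imp_differentiable:
  "(f has_real_derivative D) (at x) \<Longrightarrow> f differentiable (at x)"
  by (auto simp: differentiable_def dest: has_field_derivative_imp_has_derivative)

lemma frechet_derivative_real_one:
  fixes f :: "real \<Rightarrow> real"
  assumes "f differentiable (at x)"
  shows "frechet_derivative f (at x) 1 = deriv f x"
proof -
  have "(f has_derivative (*) (deriv f x)) (at x)"
    using assms DERIV_deriv_iff_real_differentiable by (simp add: has_field_derivative_def)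
  then show ?thesis by (simp add: frechet_derivative_at[symmetric])
qed

lemma Ck_on_Suc_real:
  fixes f :: "real \<Rightarrow> real"
  assumes "open T"
  shows "Ck_on (Suc k) T f \<longleftrightarrow> (\<forall>x\<in>T. f differentiable (at x)) \<and> Ck_on k T (deriv f)"
proof -
  have "(\<forall>x\<in>T. f differentiable (at x)) \<Longrightarrow>
      Ck_on k T (\<lambda>x. frechet_derivative f (at x) 1) = Ck_on k T (deriv f)"
    by (rule Ck_on_cong[OF assms]) (simp add: frechet_derivative_real_one)
  then show ?thesis by (auto simp: Basis_real_def)
qed

lemma Ck_on_has_real_derivative:
  fixes f :: "real \<Rightarrow> real"
  assumes "open T" "Ck_on (Suc k) T f" "x \<in> T"
  shows "(f has_real_derivative deriv f x) (at x)"
  using assms DERIV_deriv_iff_real_differentiable Ck_on_Suc_real by blast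

lemma Ck_const: "open T \<Longrightarrow> Ck_on k T (\<lambda>x::real. c::real)"
proof (induction k arbitrary: c)
  case 0
  then show ?case by simp
next
  case (Suc k)
  have "deriv (\<lambda>x::real. c) = (\<lambda>x. 0)" by (rule ext) simp
  with Suc show ?case by (simp add: Ck_on_Suc_real)
qed

lemma Ck_add:
  fixes f g :: "real \<Rightarrow> real"
  assumes "open T"
  shows "Ck_on k T f \<Longrightarrow> Ck_on k T g \<Longrightarrow> Ck_on k T (\<lambda>x. f x + g x)"
proof (induction k arbitrary: f g)
  case 0
  then show ?case by (auto intro: continuous_on_add)
next
  case (Suc k)
  then have df: "\<forall>x\<in>T. f differentiable (at x)" and dg: "\<forall>x\<in>T. g differentiable (at x)"
    and cf: "Ck_on k T (deriv f)" and cg: "Ck_on k T (deriv g)"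
    using Ck_on_Suc_real[OF assms] by auto
  have sum_rule: "deriv (\<lambda>x. f x + g x) x = deriv f x + deriv g x" if "x \<in> T" for x
    using that df dg DERIV_deriv_iff_real_differentiable
    by (intro DERIV_imp_deriv) (auto intro!: derivative_eq_intros)
  have "Ck_on k T (\<lambda>x. deriv f x + deriv g x)" using Suc.IH cf cg by blast
  then have "Ck_on k T (deriv (\<lambda>x. f x + g x))" using Ck_on_cong[OF assms sum_rule] by simp
  then show ?case unfolding Ck_on_Suc_real[OF assms] using df dg by auto
qed

lemma Ck_mult:
  fixes f g :: "real \<Rightarrow> real"
  assumes "open T"
  shows "Ck_on k T f \<Longrightarrow> Ck_on k T g \<Longrightarrow> Ck_on k T (\<lambda>x. f x * g x)"
proof (induction k arbitrary: f g)
  case 0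
  then show ?case by (auto intro: continuous_on_mult)
next
  case (Suc k)
  then have df: "\<forall>x\<in>T. f differentiable (at x)" and dg: "\<forall>x\<in>T. g differentiable (at x)"
    and cf: "Ck_on k T (deriv f)" and cg: "Ck_on k T (deriv g)"
    using Ck_on_Suc_real[OF assms] by auto
  have fg: "Ck_on k T f" "Ck_on k T g" using Suc.prems Ck_on_Suc_imp_Ck_on by blast+
  have product_rule: "deriv (\<lambda>x. f x * g x) x = deriv f x * g x + f x * deriv g x"
    if "x \<in> T" for x
    using that df dg DERIV_deriv_iff_real_differentiable
    by (intro DERIV_imp_deriv) (auto intro!: derivative_eq_intros)
  have "Ck_on k T (\<lambda>x. deriv f x * g x + f x * deriv g x)"
    by (rule Ck_add[OF assms]) (use Suc.IH cf cg fg in blast)+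
  then have "Ck_on k T (deriv (\<lambda>x. f x * g x))" using Ck_on_cong[OF assms product_rule] by simp
  then show ?case unfolding Ck_on_Suc_real[OF assms] using df dg by auto
qed

lemma Ck_neg: "open T \<Longrightarrow> Ck_on k T f \<Longrightarrow> Ck_on k T (\<lambda>x::real. - f x)"
proof -
  assume T: "open T" and f: "Ck_on k T f"
  have "Ck_on k T (\<lambda>x. (-1) * f x)" by (rule Ck_mult[OF T Ck_const[OF T] f])
  then show ?thesis by simp
qed

lemma Ck_sum:
  fixes f :: "'b \<Rightarrow> real \<Rightarrow> real"
  assumes "open T" "finite B" "\<And>b. b \<in> B \<Longrightarrow> Ck_on k T (f b)"
  shows "Ck_on k T (\<lambda>x. \<Sum>b\<in>B. f b x)"
  using assms(2,3)
proof (induction B rule: finite_induct)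
  case empty
  then show ?case by (simp add: Ck_const[OF assms(1)])
next
  case (insert b B)
  then show ?case by (simp add: Ck_add[OF assms(1)])
qed

lemma Ck_exp: "open T \<Longrightarrow> Ck_on k T (\<lambda>x::real. exp (c * x))"
proof (induction k)
  case 0
  then show ?case by (auto intro!: continuous_intros)
next
  case (Suc k)
  have "deriv (\<lambda>x::real. exp (c * x)) = (\<lambda>x. c * exp (c * x))"
    by (rule ext, rule DERIV_imp_deriv) (auto intro!: derivative_eq_intros)
  moreover have "Ck_on k T (\<lambda>x. c * exp (c * x))"
    using Suc Ck_mult Ck_const by blast
  moreover have "(\<lambda>x::real. exp (c * x)) differentiable (at x)" for x
    by (rule real_DERIV_imp_differentiable) (auto intro!: derivative_eq_intros)
  ultimately show ?case unfolding Ck_on_Suc_real[OF Suc.prems] by auto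
qed

lemma Ck_on_compose_curve:
  fixes f :: "'a::euclidean_space \<Rightarrow> real" and \<phi> :: "real \<Rightarrow> 'a"
  assumes oS: "open S" and oT: "open T" and im: "\<phi> ` T \<subseteq> S"
    and d\<phi>: "\<And>x. x \<in> T \<Longrightarrow> (\<phi> has_vector_derivative \<phi>' x) (at x)"
    and c\<phi>: "\<And>b j. b \<in> Basis \<Longrightarrow> Ck_on j T (\<lambda>x. \<phi>' x \<bullet> b)"
  shows "Ck_on k S f \<Longrightarrow> Ck_on k T (\<lambda>x. f (\<phi> x))"
proof (induction k arbitrary: f)
  case 0
  have "continuous_on T \<phi>"
    using d\<phi> by (auto intro!: continuous_at_imp_continuous_on dest: has_vector_derivative_continuous)
  then show ?case using 0 im by (auto intro: continuous_on_compose2)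
next
  case (Suc k)
  from Suc.prems have df: "\<forall>y\<in>S. f differentiable (at y)"
    and cf: "\<forall>i\<in>Basis. Ck_on k S (\<lambda>y. frechet_derivative f (at y) i)" by auto
  have chain: "((\<lambda>x. f (\<phi> x)) has_real_derivative
      (\<Sum>b\<in>Basis. (\<phi>' x \<bullet> b) * frechet_derivative f (at (\<phi> x)) b)) (at x)" if x: "x \<in> T" for x
  proof -
    let ?F = "frechet_derivative f (at (\<phi> x))"
    have hf: "(f has_derivative ?F) (at (\<phi> x))" using df x im frechet_derivative_works by blast
    have h\<phi>: "(\<phi> has_derivative (\<lambda>h. h *\<^sub>R \<phi>' x)) (at x)"
      using d\<phi>[OF x] by (simp add: has_vector_derivative_def)
    have c: "((\<lambda>x. f (\<phi> x)) has_derivative (\<lambda>h. ?F (h *\<^sub>R \<phi>' x))) (at x)"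
      using diff_chain_at[OF h\<phi> hf] by (simp add: o_def)
    have lin: "linear ?F" using hf has_derivative_linear by blast
    have coord: "?F (h *\<^sub>R \<phi>' x) = (\<Sum>b\<in>Basis. (\<phi>' x \<bullet> b) * ?F b) * h" for h
    proof -
      have "?F (h *\<^sub>R \<phi>' x) = h * ?F (\<Sum>b\<in>Basis. (\<phi>' x \<bullet> b) *\<^sub>R b)"
        using linear_scale[OF lin] by (simp add: euclidean_representation)
      also have "\<dots> = h * (\<Sum>b\<in>Basis. (\<phi>' x \<bullet> b) * ?F b)"
        by (simp add: linear_sum[OF lin] linear_scale[OF lin])
      finally show ?thesis by simp
    qed
    have "(\<lambda>h. ?F (h *\<^sub>R \<phi>' x)) = (*) (\<Sum>b\<in>Basis. (\<phi>' x \<bullet> b) * ?F b)"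
      by (rule ext) (simp only: coord mult.commute)
    with c show ?thesis by (simp add: has_field_derivative_def)
  qed
  have diff: "\<forall>x\<in>T. (\<lambda>x. f (\<phi> x)) differentiable (at x)"
    using chain real_DERIV_imp_differentiable by blast
  have deriv_eq: "deriv (\<lambda>x. f (\<phi> x)) x = (\<Sum>b\<in>Basis. (\<phi>' x \<bullet> b) * frechet_derivative f (at (\<phi> x)) b)"
    if "x \<in> T" for x using chain[OF that] by (rule DERIV_imp_deriv)
  have "Ck_on k T (\<lambda>x. \<Sum>b\<in>Basis. (\<phi>' x \<bullet> b) * frechet_derivative f (at (\<phi> x)) b)"
    by (rule Ck_sum[OF oT]) (auto intro!: Ck_mult[OF oT] c\<phi> Suc.IH cf[rule_format])
  then have "Ck_on k T (deriv (\<lambda>x. f (\<phi> x)))" using Ck_on_cong[OF oT deriv_eq] by simp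
  then show ?case unfolding Ck_on_Suc_real[OF oT] using diff by auto
qed

lemma frechet_derivative_along_curve:
  fixes F :: "'a::real_normed_vector \<Rightarrow> real"
  assumes F: "(F has_derivative F') (at p)" and c: "(c has_vector_derivative v) (at 0)" "c 0 = p"
    and d: "d > 0" "\<And>t. \<bar>t\<bar> < d \<Longrightarrow> F (c t) = h t"
    and h: "(h has_real_derivative D) (at 0)"
  shows "F' v = D"
proof -
  have cd: "(c has_derivative (\<lambda>t. t *\<^sub>R v)) (at 0)" using c(1) by (simp add: has_vector_derivative_def)
  have "((\<lambda>t. F (c t)) has_derivative (\<lambda>t. F' (t *\<^sub>R v))) (at 0)"
    using diff_chain_at[OF cd, of F F'] F c(2) by (simp add: o_def)
  moreover have "(\<lambda>t. F' (t *\<^sub>R v)) = (*) (F' v)"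
    using linear_scale[OF has_derivative_linear[OF F]] by (auto simp: mult.commute)
  ultimately have "((\<lambda>t. F (c t)) has_real_derivative F' v) (at 0)"
    by (simp add: has_field_derivative_def)
  then have "(h has_real_derivative F' v) (at 0)"
    by (rule has_field_derivative_transform_within[OF _ d(1)]) (auto simp: d(2) dist_real_def)
  then show ?thesis using h DERIV_unique by blast
qed

lemma bilinear_expand_Basis:
  fixes B :: "'a::euclidean_space \<Rightarrow> 'b::euclidean_space \<Rightarrow> real"
  assumes "bilinear B"
  shows "B y x = (\<Sum>(b,b')\<in>Basis\<times>Basis. (y \<bullet> b) * (x \<bullet> b') * B b b')"
proof -
  have "B y x = B (\<Sum>b\<in>Basis. (y \<bullet> b) *\<^sub>R b) (\<Sum>b\<in>Basis. (x \<bullet> b) *\<^sub>R b)"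
    by (simp add: euclidean_representation)
  also have "\<dots> = (\<Sum>(b,b')\<in>Basis\<times>Basis. B ((y \<bullet> b) *\<^sub>R b) ((x \<bullet> b') *\<^sub>R b'))"
    by (rule bilinear_sum[OF assms])
  also have "\<dots> = (\<Sum>(b,b')\<in>Basis\<times>Basis. (y \<bullet> b) * (x \<bullet> b') * B b b')"
    by (rule sum.cong) (auto simp: bilinear_lmul[OF assms] bilinear_rmul[OF assms])
  finally show ?thesis .
qed

lemma bilinear_scaled_has_derivative:
  fixes B :: "complex \<times> complex \<Rightarrow> complex \<times> complex \<Rightarrow> real"
  assumes B: "bilinear B"
    and k1: "(k1 has_field_derivative K1) (at 0)" "k1 0 = 1"
    and k2: "(k2 has_field_derivative K2) (at 0)" "k2 0 = 1"
  shows "((\<lambda>t. B (fst v * k1 (of_real t), snd v * k2 (of_real t))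
                 (fst x * k1 (of_real t), snd x * k2 (of_real t)))
      has_real_derivative B v (K1 * fst x, K2 * snd x) + B (K1 * fst v, K2 * snd v) x) (at 0)"
proof -
  define f where "f = (\<lambda>h t. (fst h * k1 (of_real t), snd h * k2 (of_real t)))"
  have fd: "(f h has_vector_derivative (K1 * fst h, K2 * snd h)) (at 0)" for h
  proof -
    have 1: "((\<lambda>w. fst h * k1 w) has_field_derivative fst h * K1) (at (of_real 0))"
      using k1(1) by (auto intro!: derivative_eq_intros)
    have 2: "((\<lambda>w. snd h * k2 w) has_field_derivative snd h * K2) (at (of_real 0))"
      using k2(1) by (auto intro!: derivative_eq_intros)
    show ?thesis
      using has_vector_derivative_Pair[OF has_vector_derivative_real_field[OF 1]
          has_vector_derivative_real_field[OF 2]]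
      by (simp add: f_def mult.commute)
  qed
  have f0: "f h 0 = h" for h by (simp add: f_def k1 k2)
  have bb: "bounded_bilinear B" using B bilinear_conv_bounded_bilinear by blast
  have "((\<lambda>t. B (f v t) (f x t)) has_vector_derivative
      B (f v 0) (K1 * fst x, K2 * snd x) + B (K1 * fst v, K2 * snd v) (f x 0)) (at 0)"
    by (rule bounded_bilinear.has_vector_derivative[OF bb fd fd])
  then show ?thesis
    unfolding f0 has_real_derivative_iff_has_vector_derivative by (simp only: f_def)
qed

section \<open>The differential of the Moebius action\<close>

definition den :: "real^2^2 \<Rightarrow> complex \<Rightarrow> complex" where
  "den M z = of_real (M$2$1) * z + of_real (M$2$2)"

definition dmob :: "real^2^2 \<Rightarrow> complex \<Rightarrow> complex" where
  "dmob M z = of_real (det M) / (den M z)^2"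

definition dact :: "real^2^2 \<Rightarrow> complex \<times> complex \<Rightarrow> complex \<times> complex \<Rightarrow> complex \<times> complex" where
  "dact M p h = (dmob M (fst p) * fst h, dmob M (snd p) * snd h)"

definition dact_inv :: "real^2^2 \<Rightarrow> complex \<times> complex \<Rightarrow> complex \<times> complex \<Rightarrow> complex \<times> complex" where
  "dact_inv M p h = (fst h / dmob M (fst p), snd h / dmob M (snd p))"

lemma den_nonzero:
  assumes "det M > 0" "Im z > 0"
  shows "den M z \<noteq> 0"
proof
  assume h: "den M z = 0"
  then have "Im (den M z) = 0" by simp
  then have c: "M$2$1 = 0" using assms(2) by (simp add: den_def)
  have "Re (den M z) = 0" using h by simp
  then have "M$2$2 = 0" using c by (simp add: den_def)
  then show False using c assms(1) by (simp add: det_2)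
qed

lemma dmob_nonzero: "det M > 0 \<Longrightarrow> Im z > 0 \<Longrightarrow> dmob M z \<noteq> 0"
  using den_nonzero[of M z] by (simp add: dmob_def)

lemma den_nonzero_M2:
  assumes "det M > 0" "p \<in> M2"
  shows "den M (fst p) \<noteq> 0" "den M (snd p) \<noteq> 0"
  using assms den_nonzero by (auto simp: M2_def H2_def)

lemma mob_has_field_derivative:
  assumes "den M z \<noteq> 0"
  shows "(mob M has_field_derivative dmob M z) (at z)"
  unfolding mob_def[abs_def] using assms
  by (auto intro!: derivative_eq_intros simp: den_def dmob_def det_2 field_simps power2_eq_square)

lemma act_has_derivative:
  assumes "den M (fst p) \<noteq> 0" "den M (snd p) \<noteq> 0"
  shows "(act M has_derivative dact M p) (at p)"
proof -
  have 1: "((\<lambda>q. mob M (fst q)) has_derivative (\<lambda>h. dmob M (fst p) * fst h)) (at p)"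
    using has_derivative_compose[OF has_derivative_fst[OF has_derivative_ident]
        has_field_derivative_imp_has_derivative[OF mob_has_field_derivative[OF assms(1)]]] by simp
  have 2: "((\<lambda>q. mob M (snd q)) has_derivative (\<lambda>h. dmob M (snd p) * snd h)) (at p)"
    using has_derivative_compose[OF has_derivative_snd[OF has_derivative_ident]
        has_field_derivative_imp_has_derivative[OF mob_has_field_derivative[OF assms(2)]]] by simp
  show ?thesis using has_derivative_Pair[OF 1 2]
    by (simp add: act_def[abs_def] dact_def[abs_def])
qed

lemma act_id: "act (mat 1) q = q"
  by (simp add: act_def mob_def mat_def)

lemma dact_id: "dact (mat 1) q h = h"
  unfolding dact_def dmob_def den_def det_I by (simp add: mat_def)

lemma G_invariant_dact:
  assumes G: "G_invariant \<gamma>" and "det M > 0" "p \<in> M2"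
  shows "\<gamma> (act M p) (dact M p v) (dact M p w) = \<gamma> p v w"
proof -
  have "frechet_derivative (act M) (at p) = dact M p"
    using frechet_derivative_at[OF act_has_derivative[OF den_nonzero_M2[OF assms(2,3)]]] by simp
  then show ?thesis using G assms(2,3) unfolding G_invariant_def by metis
qed

lemma G_invariant_dact_inv:
  assumes G: "G_invariant \<gamma>" and "det M > 0" "p \<in> M2"
  shows "\<gamma> (act M p) v w = \<gamma> p (dact_inv M p v) (dact_inv M p w)"
proof -
  have "dmob M (fst p) \<noteq> 0" "dmob M (snd p) \<noteq> 0"
    using assms dmob_nonzero by (auto simp: M2_def H2_def)
  then have "dact M p (dact_inv M p h) = h" for h by (simp add: dact_def dact_inv_def)
  then show ?thesis using G_invariant_dact[OF assms, of "dact_inv M p v" "dact_inv M p w"] by simp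
qed

lemma generator_entries:
  fixes a b c :: real
  defines "X \<equiv> a *\<^sub>R e1 + b *\<^sub>R e2 + c *\<^sub>R e3"
  shows "X$1$1 = c" "X$1$2 = a + b" "X$2$1 = a - b" "X$2$2 = - c"
  by (simp_all add: X_def e1_def e2_def e3_def)

lemma mult_one_plus_entries:
  fixes M X :: "real^2^2"
  shows "(M ** (mat 1 + t *\<^sub>R X))$i$j = M$i$j + t * (M$i$1 * X$1$j + M$i$2 * X$2$j)"
proof -
  have "j = 1 \<or> j = 2" by (rule exhaust_2)
  then show ?thesis by (auto simp add: matrix_matrix_mult_def sum_2 mat_def algebra_simps)
qed

text \<open>Derivative at \<open>0\<close> of \<open>w \<mapsto> (M (1 + w X)) \<odot> Z(w)\<close> for a curve \<open>Z\<close> through \<open>z\<close>: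
  the Moebius derivative applied to \<open>Z'(0)\<close> plus the infinitesimal generator of \<open>X\<close> at \<open>z\<close>.\<close>
lemma perturbed_mob_deriv:
  fixes m11 m12 m21 m22 x11 x12 x21 x22 :: real and Zf :: "complex \<Rightarrow> complex"
  assumes Z: "(Zf has_field_derivative Z') (at 0)" and Z0: "Zf 0 = z"
    and dn: "of_real m21 * z + of_real m22 \<noteq> 0"
  shows "((\<lambda>w. ((of_real m11 + w * of_real (m11*x11 + m12*x21)) * Zf w + (of_real m12 + w * of_real (m11*x12 + m12*x22)))
            / ((of_real m21 + w * of_real (m21*x11 + m22*x21)) * Zf w + (of_real m22 + w * of_real (m21*x12 + m22*x22))))
      has_field_derivative
      (of_real (m11*m22 - m12*m21) / (of_real m21 * z + of_real m22)^2
        * (Z' + of_real x12 + of_real (x11 - x22) * z - of_real x21 * z^2))) (at 0)"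
proof -
  define P11 where "P11 = (of_real (m11*x11 + m12*x21) :: complex)"
  define P12 where "P12 = (of_real (m11*x12 + m12*x22) :: complex)"
  define P21 where "P21 = (of_real (m21*x11 + m22*x21) :: complex)"
  define P22 where "P22 = (of_real (m21*x12 + m22*x22) :: complex)"
  define D where "D = of_real m21 * z + of_real m22"
  have num: "((\<lambda>w. (of_real m11 + w * P11) * Zf w + (of_real m12 + w * P12)) has_field_derivative
      (P11 * z + of_real m11 * Z' + P12)) (at 0)"
    by (auto intro!: derivative_eq_intros Z simp: Z0)
  have den: "((\<lambda>w. (of_real m21 + w * P21) * Zf w + (of_real m22 + w * P22)) has_field_derivative
      (P21 * z + of_real m21 * Z' + P22)) (at 0)"
    by (auto intro!: derivative_eq_intros Z simp: Z0)
  have quotient_rule: "((P11 * z + of_real m11 * Z' + P12) * D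
        - (of_real m11 * z + of_real m12) * (P21 * z + of_real m21 * Z' + P22)) / (D * D)
     = of_real (m11*m22 - m12*m21) / D^2
        * (Z' + of_real x12 + of_real (x11 - x22) * z - of_real x21 * z^2)"
    by (simp add: P11_def P12_def P21_def P22_def D_def algebra_simps power2_eq_square)
  show ?thesis
    using DERIV_divide[OF num den] dn
    unfolding P11_def P12_def P21_def P22_def D_def[symmetric] quotient_rule[symmetric]
    by (simp add: Z0 D_def)
qed

text \<open>The Moebius vector field of \<open>a e1 + b e2 + c e3\<close> at \<open>z\<close>, plus a vertical part \<open>z'\<close>.\<close>
definition inf_mob :: "real \<Rightarrow> real \<Rightarrow> real \<Rightarrow> complex \<Rightarrow> complex \<Rightarrow> complex" where
  "inf_mob a b c z z' = z' + of_real (a + b) + of_real (2 * c) * z - of_real (a - b) * z^2"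

text \<open>The tangent vector at \<open>w\<^sub>s\<close> represented by \<open>\<tau> \<partial>\<^sub>s + a X1 + b X2 + c X3\<close>.\<close>
definition tangent_ws :: "real \<Rightarrow> real \<Rightarrow> real \<Rightarrow> real \<Rightarrow> real \<Rightarrow> complex \<times> complex" where
  "tangent_ws s tau a b c = (inf_mob a b c (fst (wpt s)) (fst (wpt s) * of_real (tau/2)),
                             inf_mob a b c (snd (wpt s)) (- snd (wpt s) * of_real (tau/2)))"

lemma wpt_upper: "Im (fst (wpt s)) > 0" "Im (snd (wpt s)) > 0"
  by (simp_all add: wpt_def)

text \<open>The curve defining \<open>dPhi s M\<close> has velocity \<open>dact M (w\<^sub>s)\<close> of a vector at \<open>w\<^sub>s\<close>:
  the coordinate vectors at \<open>g \<cdot> w\<^sub>s\<close> are translates of those at \<open>w\<^sub>s\<close>.\<close>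
lemma Phi_curve_has_derivative:
  assumes "det M > 0"
  shows "((\<lambda>t. Phi (s + t * tau) (M ** (mat 1 + t *\<^sub>R (a *\<^sub>R e1 + b *\<^sub>R e2 + c *\<^sub>R e3))))
     has_vector_derivative dact M (wpt s) (tangent_ws s tau a b c)) (at 0)"
proof -
  define X where "X = a *\<^sub>R e1 + b *\<^sub>R e2 + c *\<^sub>R e3"
  have X: "X$1$1 = c" "X$1$2 = a + b" "X$2$1 = a - b" "X$2$2 = - c"
    unfolding X_def by (rule generator_entries)+
  define Z1 where "Z1 = (\<lambda>w::complex. \<i> * exp ((of_real s + w * of_real tau) / 2))"
  define Z2 where "Z2 = (\<lambda>w::complex. \<i> * exp (- (of_real s + w * of_real tau) / 2))"
  define F :: "(complex \<Rightarrow> complex) \<Rightarrow> complex \<Rightarrow> complex" where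
    "F = (\<lambda>Zf w. ((of_real (M$1$1) + w * of_real (M$1$1*X$1$1 + M$1$2*X$2$1)) * Zf w
       + (of_real (M$1$2) + w * of_real (M$1$1*X$1$2 + M$1$2*X$2$2)))
            / ((of_real (M$2$1) + w * of_real (M$2$1*X$1$1 + M$2$2*X$2$1)) * Zf w
       + (of_real (M$2$2) + w * of_real (M$2$1*X$1$2 + M$2$2*X$2$2))))"
  have z1: "Z1 0 = fst (wpt s)" and z2: "Z2 0 = snd (wpt s)"
    by (simp_all add: Z1_def Z2_def wpt_def flip: exp_of_real)
  have dz1: "(Z1 has_field_derivative (fst (wpt s) * of_real (tau/2))) (at 0)"
    unfolding Z1_def wpt_def by (auto intro!: derivative_eq_intros simp flip: exp_of_real)
  have dz2: "(Z2 has_field_derivative (- snd (wpt s) * of_real (tau/2))) (at 0)"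
    unfolding Z2_def wpt_def by (auto intro!: derivative_eq_intros simp flip: exp_of_real)
  have dn1: "of_real (M$2$1) * fst (wpt s) + of_real (M$2$2) \<noteq> 0"
    using den_nonzero[OF assms wpt_upper(1)] by (simp add: den_def)
  have dn2: "of_real (M$2$1) * snd (wpt s) + of_real (M$2$2) \<noteq> 0"
    using den_nonzero[OF assms wpt_upper(2)] by (simp add: den_def)
  have D1: "(F Z1 has_field_derivative
      dmob M (fst (wpt s)) * inf_mob a b c (fst (wpt s)) (fst (wpt s) * of_real (tau/2))) (at 0)"
    using perturbed_mob_deriv[OF dz1 z1 dn1, of "M$1$1" "X$1$1" "M$1$2" "X$2$1" "X$1$2" "X$2$2"]
    unfolding F_def dmob_def inf_mob_def den_def det_2 X by (simp add: algebra_simps)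
  have D2: "(F Z2 has_field_derivative
      dmob M (snd (wpt s)) * inf_mob a b c (snd (wpt s)) (- snd (wpt s) * of_real (tau/2))) (at 0)"
    using perturbed_mob_deriv[OF dz2 z2 dn2, of "M$1$1" "X$1$1" "M$1$2" "X$2$1" "X$1$2" "X$2$2"]
    unfolding F_def dmob_def inf_mob_def den_def det_2 X by (simp add: algebra_simps)
  have curve: "(\<lambda>t. Phi (s + t * tau) (M ** (mat 1 + t *\<^sub>R X))) = (\<lambda>t. (F Z1 (of_real t), F Z2 (of_real t)))"
    by (rule ext) (simp add: Phi_def act_def mob_def mult_one_plus_entries wpt_def F_def Z1_def Z2_def
        algebra_simps flip: exp_of_real)
  have "((\<lambda>t. (F Z1 (of_real t), F Z2 (of_real t))) has_vector_derivative
      dact M (wpt s) (tangent_ws s tau a b c)) (at 0)"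
    using has_vector_derivative_Pair[OF has_vector_derivative_real_field[of "F Z1" _ 0]
        has_vector_derivative_real_field[of "F Z2" _ 0]] D1 D2
    by (simp add: dact_def tangent_ws_def)
  then show ?thesis unfolding X_def[symmetric] curve .
qed

lemma dPhi_eq:
  assumes "det M > 0"
  shows "dPhi s M tau a b c = dact M (wpt s) (tangent_ws s tau a b c)"
  unfolding dPhi_def by (rule vector_derivative_at[OF Phi_curve_has_derivative[OF assms]])

lemma tangent_ws_explicit:
  "tangent_ws s tau a b c =
     (Complex (a + b + (a - b) * (exp (s/2))^2) (exp (s/2) * (tau/2 + 2*c)),
      Complex (a + b + (a - b) / (exp (s/2))^2) ((2*c - tau/2) / exp (s/2)))"
proof -
  have e: "exp (-(s/2)) = 1 / exp (s/2)" by (simp add: exp_minus field_simps)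
  show ?thesis
    by (simp add: tangent_ws_def inf_mob_def wpt_def complex_eq_iff power2_eq_square e field_simps)
qed

lemma open_M2: "open M2"
proof -
  have "M2 = {p. 0 < Im (fst p)} \<inter> {p. 0 < Im (snd p)} \<inter> {p. fst p \<noteq> snd p}"
    by (auto simp: M2_def H2_def)
  moreover have "open {p::complex\<times>complex. 0 < Im (fst p)}" "open {p::complex\<times>complex. 0 < Im (snd p)}"
    by (intro open_Collect_less continuous_intros)+
  moreover have "open {p::complex\<times>complex. fst p \<noteq> snd p}"
    by (intro open_Collect_neq continuous_intros)
  ultimately show ?thesis by (metis open_Int)
qed

lemma wpt_M2: "s > 0 \<Longrightarrow> wpt s \<in> M2"
  by (auto simp: wpt_def M2_def H2_def complex_eq_iff)

definition wpt_vel :: "real \<Rightarrow> complex \<times> complex" where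
  "wpt_vel x = (\<i> * of_real (exp (x/2) / 2), - \<i> * of_real (exp (-x/2) / 2))"

lemma wpt_has_vector_derivative: "(wpt has_vector_derivative wpt_vel x) (at x)"
proof -
  have 1: "((\<lambda>x. \<i> * complex_of_real (exp (x/2))) has_vector_derivative \<i> * of_real (exp (x/2) / 2)) (at x)"
    by (auto intro!: derivative_eq_intros)
  have 2: "((\<lambda>x. \<i> * complex_of_real (exp (-x/2))) has_vector_derivative - \<i> * of_real (exp (-x/2) / 2)) (at x)"
    by (auto intro!: derivative_eq_intros)
  show ?thesis using has_vector_derivative_Pair[OF 1 2]
    by (simp add: wpt_def[abs_def] wpt_vel_def)
qed

lemma Ck_wpt_vel: "Ck_on k {0<..} (\<lambda>x. wpt_vel x \<bullet> b)"
proof -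
  have "wpt_vel x \<bullet> b = exp ((1/2) * x) * (Im (fst b) / 2) + exp ((-1/2) * x) * (- Im (snd b) / 2)" for x
    by (cases b) (simp add: wpt_vel_def inner_Pair inner_complex_def algebra_simps)
  moreover have "Ck_on k {0<..} (\<lambda>x. exp ((1/2) * x) * (Im (fst b) / 2) + exp ((-1/2) * x) * (- Im (snd b) / 2))"
    by (intro Ck_add Ck_mult Ck_exp Ck_const) auto
  ultimately show ?thesis by simp
qed

section \<open>An adapted frame at \<open>w\<^sub>s\<close>\<close>

text \<open>With \<open>u = e\<^sup>s\<^sup>/\<^sup>2\<close> the vectors \<open>E1 u\<close>, \<open>J (E1 u)\<close>, \<open>E2 u\<close>, \<open>J (E2 u)\<close> form a real basis of the
  tangent space; these are the coordinates of a vector with respect to it.\<close>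
definition E1 :: "real \<Rightarrow> complex \<times> complex" where
  "E1 u = (of_real u, of_real (1/u))"
definition E2 :: "real \<Rightarrow> complex \<times> complex" where
  "E2 u = (of_real u, - of_real (1/u))"

definition coord_E1 :: "real \<Rightarrow> complex \<times> complex \<Rightarrow> real" where
  "coord_E1 u v = (Re (fst v) / u + Re (snd v) * u) / 2"
definition coord_JE1 :: "real \<Rightarrow> complex \<times> complex \<Rightarrow> real" where
  "coord_JE1 u v = (Im (fst v) / u + Im (snd v) * u) / 2"
definition coord_E2 :: "real \<Rightarrow> complex \<times> complex \<Rightarrow> real" where
  "coord_E2 u v = (Re (fst v) / u - Re (snd v) * u) / 2"
definition coord_JE2 :: "real \<Rightarrow> complex \<times> complex \<Rightarrow> real" where
  "coord_JE2 u v = (Im (fst v) / u - Im (snd v) * u) / 2"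

lemma frame_decomposition:
  assumes "u > 0"
  shows "v = coord_E1 u v *\<^sub>R E1 u + coord_JE1 u v *\<^sub>R Jc (E1 u)
           + coord_E2 u v *\<^sub>R E2 u + coord_JE2 u v *\<^sub>R Jc (E2 u)"
  using assms
  by (cases v) (simp add: prod_eq_iff complex_eq_iff coord_E1_def coord_JE1_def coord_E2_def
      coord_JE2_def Jc_def E1_def E2_def field_simps)

lemma bilinear_diagonal_frame:
  assumes B: "bilinear B" and h: "B F1 F1 = a" "B F2 F2 = a" "B F3 F3 = b" "B F4 F4 = b"
   "B F1 F2 = 0" "B F2 F1 = 0" "B F1 F3 = 0" "B F3 F1 = 0" "B F1 F4 = 0" "B F4 F1 = 0"
   "B F2 F3 = 0" "B F3 F2 = 0" "B F2 F4 = 0" "B F4 F2 = 0" "B F3 F4 = 0" "B F4 F3 = 0"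
   and v: "v = c1 *\<^sub>R F1 + c2 *\<^sub>R F2 + c3 *\<^sub>R F3 + c4 *\<^sub>R F4"
   and w: "w = d1 *\<^sub>R F1 + d2 *\<^sub>R F2 + d3 *\<^sub>R F3 + d4 *\<^sub>R F4"
  shows "B v w = a * (c1*d1 + c2*d2) + b * (c3*d3 + c4*d4)"
  unfolding v w
  by (simp add: bilinear_ladd[OF B] bilinear_radd[OF B] bilinear_lmul[OF B] bilinear_rmul[OF B] h
      algebra_simps)

text \<open>The rotation \<open>z \<mapsto> -1/z\<close> followed by the swap \<open>P\<close> fixes \<open>w\<^sub>s\<close>; \<open>rot_swap\<close> is its
  differential there.\<close>
definition rot90 :: "real^2^2" where "rot90 = vector [vector [0, 1], vector [-1, 0]]"

definition rot_swap :: "real \<Rightarrow> complex \<times> complex \<Rightarrow> complex \<times> complex" where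
  "rot_swap u v = (- of_real (u^2) * snd v, - fst v / of_real (u^2))"

lemma rot90_facts:
  shows "det rot90 = 1" "act rot90 (wpt s) = swapP (wpt s)"
    "swapP (dact rot90 (wpt s) v) = rot_swap (exp (s/2)) v"
proof -
  show "det rot90 = 1" by (simp add: rot90_def det_2)
  show "act rot90 (wpt s) = swapP (wpt s)"
    by (simp add: rot90_def act_def mob_def wpt_def swapP_def field_simps exp_minus)
  have e: "exp (-(s/2)) = 1 / exp (s/2)" by (simp add: exp_minus field_simps)
  show "swapP (dact rot90 (wpt s) v) = rot_swap (exp (s/2)) v"
    by (simp add: rot90_def dact_def dmob_def den_def det_2 wpt_def swapP_def rot_swap_def e
        power2_eq_square field_simps)
qed

lemma rot_swap_frame:
  assumes u: "u > 0"
  shows "rot_swap u (E1 u) = - E1 u" "rot_swap u (Jc (E1 u)) = - Jc (E1 u)"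
    "rot_swap u (E2 u) = E2 u" "rot_swap u (Jc (E2 u)) = Jc (E2 u)"
proof -
  have rot_swap_J: "rot_swap u (Jc x) = Jc (rot_swap u x)" for x by (simp add: Jc_def rot_swap_def)
  show r1: "rot_swap u (E1 u) = - E1 u" and r2: "rot_swap u (E2 u) = E2 u"
    using u by (simp_all add: rot_swap_def E1_def E2_def power2_eq_square field_simps)
  show "rot_swap u (Jc (E1 u)) = - Jc (E1 u)" unfolding rot_swap_J r1 by (simp add: Jc_def E1_def)
  show "rot_swap u (Jc (E2 u)) = Jc (E2 u)" by (simp add: rot_swap_J r2)
qed

definition alpha_coef where "alpha_coef \<gamma> s = \<gamma> (wpt s) (E1 (exp (s/2))) (E1 (exp (s/2)))"
definition beta_coef where "beta_coef \<gamma> s = \<gamma> (wpt s) (E2 (exp (s/2))) (E2 (exp (s/2)))"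

lemma Jc_add: "Jc (x + y) = Jc x + Jc y" and Jc_scale: "Jc (r *\<^sub>R x) = r *\<^sub>R Jc x"
  by (simp_all add: Jc_def algebra_simps scaleR_conv_of_real)

lemma Basis_pairs: "((1::complex), (0::complex)) \<in> (Basis :: (complex \<times> complex) set)"
  "((0::complex), (1::complex)) \<in> (Basis :: (complex \<times> complex) set)"
  by (auto simp: Basis_prod_def Basis_complex_def)

lemma sinh_half: "sinh ((x::real)/2) = (exp (x/2) - 1 / exp (x/2)) / 2"
  by (simp add: sinh_def exp_minus inverse_eq_divide)

lemma cosh_half: "cosh ((x::real)/2) = (exp (x/2) + 1 / exp (x/2)) / 2"
  by (simp add: cosh_def exp_minus inverse_eq_divide)

lemma cosh_half_squared: "(cosh ((x::real)/2))^2 = (exp (1 * x) + 2 + exp ((-1) * x)) / 4"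
proof -
  have a: "exp (x/2) * exp (x/2) = exp (1 * x)" by (simp flip: exp_add)
  have b: "exp ((-1) * x) = 1 / exp (1 * x)" by (simp add: exp_minus inverse_eq_divide)
  have "exp (x/2) > 0" by simp
  then show ?thesis unfolding cosh_half b a[symmetric] by (simp add: power2_eq_square field_simps)
qed

lemma tangent_ws_coords:
  fixes s tau a b c :: real
  defines "u \<equiv> exp (s/2)"
  shows "coord_E1 u (tangent_ws s tau a b c) = a * (u + 1/u)"
    "coord_JE1 u (tangent_ws s tau a b c) = 2 * c"
    "coord_E2 u (tangent_ws s tau a b c) = b * (1/u - u)"
    "coord_JE2 u (tangent_ws s tau a b c) = tau / 2"
proof -
  have "u > 0" by (simp add: u_def)
  then show "coord_E1 u (tangent_ws s tau a b c) = a * (u + 1/u)"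
    "coord_JE1 u (tangent_ws s tau a b c) = 2 * c"
    "coord_E2 u (tangent_ws s tau a b c) = b * (1/u - u)"
    "coord_JE2 u (tangent_ws s tau a b c) = tau / 2"
    unfolding tangent_ws_explicit u_def[symmetric] coord_E1_def coord_JE1_def coord_E2_def coord_JE2_def
    by (simp_all add: field_simps power2_eq_square)
qed

definition potential :: "(complex \<times> complex \<Rightarrow> complex \<times> complex \<Rightarrow> complex \<times> complex \<Rightarrow> real) \<Rightarrow> real \<Rightarrow> real"
  where "potential \<gamma> x = 4 * (cosh (x/2))^2 * alpha_coef \<gamma> x"

locale invariant_kaehler =
  fixes \<gamma> :: "complex \<times> complex \<Rightarrow> complex \<times> complex \<Rightarrow> complex \<times> complex \<Rightarrow> real"
  assumes K: "kaehler_metric M2 \<gamma>" and G: "G_invariant \<gamma>"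
begin

lemma metric_bilinear: "p \<in> M2 \<Longrightarrow> bilinear (\<gamma> p)"
  using K by (simp add: kaehler_metric_def riemannian_metric_def)

lemma metric_sym: "p \<in> M2 \<Longrightarrow> \<gamma> p v w = \<gamma> p w v"
  using K unfolding kaehler_metric_def riemannian_metric_def by blast

lemma metric_J: "p \<in> M2 \<Longrightarrow> \<gamma> p (Jc v) (Jc w) = \<gamma> p v w"
  using K unfolding kaehler_metric_def by blast

lemma kform_closed: "p \<in> M2 \<Longrightarrow> d2form (kform \<gamma>) p u v x = 0"
  using K unfolding kaehler_metric_def by blast

lemma metric_smooth_along_wpt:
  "b \<in> Basis \<Longrightarrow> b' \<in> Basis \<Longrightarrow> Ck_on k {0<..} (\<lambda>x. \<gamma> (wpt x) b b')"
proof -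
  assume "b \<in> Basis" "b' \<in> Basis"
  then have smooth: "Ck_on k M2 (\<lambda>p. \<gamma> p b b')"
    using K by (simp add: kaehler_metric_def riemannian_metric_def smooth_on_def)
  show ?thesis
    by (rule Ck_on_compose_curve[OF open_M2 open_greaterThan _ wpt_has_vector_derivative Ck_wpt_vel
          smooth]) (auto simp: wpt_M2)
qed

lemma metric_rot_swap_invariant:
  assumes "s > 0"
  shows "\<gamma> (wpt s) (rot_swap (exp (s/2)) v) (rot_swap (exp (s/2)) w) = \<gamma> (wpt s) v w"
proof -
  have p: "wpt s \<in> M2" using wpt_M2[OF assms] .
  have q: "swapP (wpt s) \<in> M2" using p by (auto simp: M2_def swapP_def)
  have swap_swap: "swapP (swapP x) = x" for x by (simp add: swapP_def)
  have "\<gamma> (swapP (swapP (wpt s))) (swapP (dact rot90 (wpt s) v)) (swapP (dact rot90 (wpt s) w))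
      = \<gamma> (swapP (wpt s)) (dact rot90 (wpt s) v) (dact rot90 (wpt s) w)"
    using G q unfolding G_invariant_def by blast
  also have "\<dots> = \<gamma> (wpt s) v w"
    using G_invariant_dact[OF G, of rot90 "wpt s" v w] p by (simp add: rot90_facts)
  finally show ?thesis by (simp only: rot90_facts(3) swap_swap)
qed

text \<open>\<open>J\<close>-invariance and symmetry make every vector orthogonal to its \<open>J\<close>-image.\<close>
lemma metric_J_orthogonal:
  assumes p: "p \<in> M2"
  shows "\<gamma> p x (Jc x) = 0"
proof -
  have "\<gamma> p x (Jc x) = \<gamma> p (Jc x) (Jc (Jc x))" using metric_J[OF p] by simp
  also have "Jc (Jc x) = - x" by (cases x) (simp add: Jc_def)
  also have "\<gamma> p (Jc x) (- x) = - \<gamma> p (Jc x) x" by (rule bilinear_rneg[OF metric_bilinear[OF p]])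
  also have "\<dots> = - \<gamma> p x (Jc x)" using metric_sym[OF p] by simp
  finally show ?thesis by simp
qed

lemma metric_rot_swap_eigen_orthogonal:
  assumes s: "s > 0"
    and x: "rot_swap (exp (s/2)) x = - x" and y: "rot_swap (exp (s/2)) y = y"
  shows "\<gamma> (wpt s) x y = 0"
proof -
  have "\<gamma> (wpt s) x y = \<gamma> (wpt s) (rot_swap (exp (s/2)) x) (rot_swap (exp (s/2)) y)"
    using metric_rot_swap_invariant[OF s] by simp
  also have "\<dots> = - \<gamma> (wpt s) x y"
    using x y by (simp add: bilinear_lneg[OF metric_bilinear[OF wpt_M2[OF s]]])
  finally show ?thesis by simp
qed

text \<open>The metric at \<open>w\<^sub>s\<close> is diagonal in the adapted frame: \<open>J\<close>-invariance makes \<open>v\<close> and \<open>J v\<close>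
  orthogonal with equal lengths, and the \<open>rot_swap\<close>-symmetry separates the \<open>E1\<close>- and
  \<open>E2\<close>-planes, which are its \<open>-1\<close> and \<open>+1\<close> eigenspaces.\<close>
lemma metric_at_wpt:
  assumes "s > 0"
  defines "u \<equiv> exp (s/2)"
  shows "\<gamma> (wpt s) v w
       = alpha_coef \<gamma> s * (coord_E1 u v * coord_E1 u w + coord_JE1 u v * coord_JE1 u w)
       + beta_coef \<gamma> s * (coord_E2 u v * coord_E2 u w + coord_JE2 u v * coord_JE2 u w)"
proof -
  have u: "u > 0" by (simp add: u_def)
  define p where "p = wpt s"
  have p: "p \<in> M2" unfolding p_def using wpt_M2[OF assms(1)] .
  note B = metric_bilinear[OF p]
  note r = rot_swap_frame[OF u]
  have eigen_orth: "\<gamma> p x y = 0" if "rot_swap u x = - x" "rot_swap u y = y" for x y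
    using metric_rot_swap_eigen_orthogonal[OF assms(1)] that by (simp add: p_def u_def)
  have d: "\<gamma> p (E1 u) (E1 u) = alpha_coef \<gamma> s" "\<gamma> p (Jc (E1 u)) (Jc (E1 u)) = alpha_coef \<gamma> s"
     "\<gamma> p (E2 u) (E2 u) = beta_coef \<gamma> s" "\<gamma> p (Jc (E2 u)) (Jc (E2 u)) = beta_coef \<gamma> s"
    using metric_J[OF p] unfolding alpha_coef_def beta_coef_def p_def u_def by simp_all
  have z: "\<gamma> p (E1 u) (Jc (E1 u)) = 0" "\<gamma> p (Jc (E1 u)) (E1 u) = 0"
    "\<gamma> p (E2 u) (Jc (E2 u)) = 0" "\<gamma> p (Jc (E2 u)) (E2 u) = 0"
    "\<gamma> p (E1 u) (E2 u) = 0" "\<gamma> p (E1 u) (Jc (E2 u)) = 0"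
    "\<gamma> p (Jc (E1 u)) (E2 u) = 0" "\<gamma> p (Jc (E1 u)) (Jc (E2 u)) = 0"
    using metric_J_orthogonal[OF p] metric_sym[OF p] eigen_orth r by metis+
  have z2: "\<gamma> p (E2 u) (E1 u) = 0" "\<gamma> p (Jc (E2 u)) (E1 u) = 0"
    "\<gamma> p (E2 u) (Jc (E1 u)) = 0" "\<gamma> p (Jc (E2 u)) (Jc (E1 u)) = 0"
    using z metric_sym[OF p] by metis+
  show ?thesis
    unfolding p_def[symmetric]
    by (rule bilinear_diagonal_frame[OF B d(1,2,3,4) z(1,2,5) z2(1) z(6) z2(2) z(7) z2(3) z(8) z2(4)
          z(3,4) frame_decomposition[OF u, of v] frame_decomposition[OF u, of w]])
qed

section \<open>Closedness of the Kaehler form as an ODE\<close>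

lemma kform_bilinear: "p \<in> M2 \<Longrightarrow> bilinear (kform \<gamma> p)"
proof -
  assume p: "p \<in> M2"
  note B = metric_bilinear[OF p]
  show ?thesis
    unfolding bilinear_def linear_iff kform_def
    by (simp add: Jc_add Jc_scale bilinear_ladd[OF B] bilinear_radd[OF B]
        bilinear_lmul[OF B] bilinear_rmul[OF B])
qed

lemma kform_has_derivative:
  assumes p: "p \<in> M2"
  shows "((\<lambda>q. kform \<gamma> q v x) has_derivative frechet_derivative (\<lambda>q. kform \<gamma> q v x) (at p)) (at p)"
proof -
  have e: "kform \<gamma> q v x = (\<Sum>(b,b')\<in>Basis\<times>Basis. (Jc v \<bullet> b) * (x \<bullet> b') * \<gamma> q b b')" if "q \<in> M2" for q
    unfolding kform_def by (rule bilinear_expand_Basis[OF metric_bilinear[OF that]])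
  have "(\<lambda>q. \<gamma> q b b') differentiable (at p)" if "b \<in> Basis" "b' \<in> Basis" for b b'
    using K that p by (simp add: kaehler_metric_def riemannian_metric_def smooth_on_def, metis Ck_on.simps(2))
  then have "(\<lambda>q. \<Sum>(b,b')\<in>Basis\<times>Basis. (Jc v \<bullet> b) * (x \<bullet> b') * \<gamma> q b b') differentiable (at p)"
    by (auto intro!: differentiable_sum differentiable_mult differentiable_const)
  then have "(\<lambda>q. kform \<gamma> q v x) differentiable (at p)"
    using differentiable_cong_open[OF open_M2 p e] by simp
  then show ?thesis using frechet_derivative_works by blast
qed

text \<open>Derivative of the Kaehler form in a group direction \<open>a X1 + b X2 + c X3\<close> at \<open>w\<^sub>s\<close>:
  by invariance, moving the base point along the one-parameter family \<open>1 + t X\<close> amounts to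
  transforming the arguments by \<open>dact_inv\<close>, assumed here to be multiplication by \<open>k1\<close>, \<open>k2\<close>.\<close>
lemma kform_deriv_group_direction:
  assumes s: "s > 0" and d: "d > 0"
    and N: "\<And>t. \<bar>t\<bar> < d \<Longrightarrow> det (mat 1 ** (mat 1 + t *\<^sub>R (a *\<^sub>R e1 + b *\<^sub>R e2 + c *\<^sub>R e3))) > 0"
    and L: "\<And>t h. \<bar>t\<bar> < d \<Longrightarrow> dact_inv (mat 1 ** (mat 1 + t *\<^sub>R (a *\<^sub>R e1 + b *\<^sub>R e2 + c *\<^sub>R e3))) (wpt s) h
          = (fst h * k1 (of_real t), snd h * k2 (of_real t))"
    and k1: "(k1 has_field_derivative K1) (at 0)" "k1 0 = 1"
    and k2: "(k2 has_field_derivative K2) (at 0)" "k2 0 = 1"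
  shows "frechet_derivative (\<lambda>q. kform \<gamma> q v x) (at (wpt s)) (tangent_ws s 0 a b c)
     = kform \<gamma> (wpt s) v (K1 * fst x, K2 * snd x) + kform \<gamma> (wpt s) (K1 * fst v, K2 * snd v) x"
proof -
  define p where "p = wpt s"
  have p: "p \<in> M2" using wpt_M2[OF s] by (simp add: p_def)
  define X where "X = a *\<^sub>R e1 + b *\<^sub>R e2 + c *\<^sub>R e3"
  define f where "f = (\<lambda>h t. (fst h * k1 (of_real t), snd h * k2 (of_real t)))"
  define h where "h = (\<lambda>t. kform \<gamma> p (f v t) (f x t))"
  have curve: "((\<lambda>t. Phi (s + t * 0) (mat 1 ** (mat 1 + t *\<^sub>R X))) has_vector_derivative
      tangent_ws s 0 a b c) (at 0)"
    using Phi_curve_has_derivative[of "mat 1" s 0 a b c] by (simp add: det_I dact_id X_def)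
  have curve0: "Phi (s + 0 * 0) (mat 1 ** (mat 1 + 0 *\<^sub>R X)) = p"
    by (simp add: Phi_def act_id p_def)
  have hd: "(h has_real_derivative
      (kform \<gamma> p v (K1 * fst x, K2 * snd x) + kform \<gamma> p (K1 * fst v, K2 * snd v) x)) (at 0)"
    unfolding h_def f_def by (rule bilinear_scaled_has_derivative[OF kform_bilinear[OF p] k1 k2])
  have on_curve: "kform \<gamma> (Phi (s + t * 0) (mat 1 ** (mat 1 + t *\<^sub>R X))) v x = h t"
    if t: "\<bar>t\<bar> < d" for t
  proof -
    define Nt where "Nt = mat 1 ** (mat 1 + t *\<^sub>R X)"
    have dN: "det Nt > 0" using N[OF t] by (simp add: Nt_def X_def)
    have Lf: "dact_inv Nt p y = f y t" for y using L[OF t] by (simp add: Nt_def X_def p_def f_def)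
    have "kform \<gamma> (act Nt p) v x = \<gamma> p (dact_inv Nt p (Jc v)) (dact_inv Nt p x)"
      unfolding kform_def by (rule G_invariant_dact_inv[OF G dN p])
    also have "\<dots> = h t" by (simp add: Lf h_def kform_def f_def Jc_def mult_ac)
    finally show ?thesis by (simp add: Phi_def Nt_def p_def)
  qed
  show ?thesis
    unfolding p_def[symmetric]
    by (rule frechet_derivative_along_curve[OF kform_has_derivative[OF p] curve curve0 d on_curve hd])
qed

text \<open>The \<open>d\<Omega>\<close>-term in the \<open>s\<close>-direction: here the base point moves along \<open>w\<^sub>s\<close> itself and
  the metric is known in closed form from \<open>metric_at_wpt\<close>.\<close>
lemma kform_deriv_s_direction:
  assumes s: "s > 0"
    and A: "(alpha_coef \<gamma> has_real_derivative A') (at s)"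
    and B: "(beta_coef \<gamma> has_real_derivative B') (at s)"
  shows "frechet_derivative (\<lambda>q. kform \<gamma> q (tangent_ws s 0 1 0 0) (tangent_ws s 0 0 0 1)) (at (wpt s))
      (tangent_ws s 1 0 0 0) = 2 * (exp (s/2) + 1 / exp (s/2)) * A'"
proof -
  define p where "p = wpt s"
  have p: "p \<in> M2" using wpt_M2[OF s] by (simp add: p_def)
  have curve: "((\<lambda>t. Phi (s + t * 1) (mat 1 ** (mat 1 + t *\<^sub>R (0 *\<^sub>R e1 + 0 *\<^sub>R e2 + 0 *\<^sub>R e3))))
      has_vector_derivative tangent_ws s 1 0 0 0) (at 0)"
    using Phi_curve_has_derivative[of "mat 1" s 1 0 0 0] by (simp add: det_I dact_id)
  have curve0: "Phi (s + 0 * 1) (mat 1 ** (mat 1 + 0 *\<^sub>R (0 *\<^sub>R e1 + 0 *\<^sub>R e2 + 0 *\<^sub>R e3))) = p"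
    by (simp add: Phi_def act_id p_def)
  have A': "((\<lambda>t. alpha_coef \<gamma> (t + s)) has_real_derivative A') (at 0)"
    using A DERIV_shift[of "alpha_coef \<gamma>" A' 0 s] by simp
  have B': "((\<lambda>t. beta_coef \<gamma> (t + s)) has_real_derivative B') (at 0)"
    using B DERIV_shift[of "beta_coef \<gamma>" B' 0 s] by simp
  define h where "h = (\<lambda>t. alpha_coef \<gamma> (t + s) *
      (((1 + (exp (s/2))^2) / exp ((t + s)/2) + (1 + 1/(exp (s/2))^2) * exp ((t + s)/2)) / 2
       * ((2 * exp (s/2) / exp ((t + s)/2) + 2 / exp (s/2) * exp ((t + s)/2)) / 2))
    + beta_coef \<gamma> (t + s) *
      (((1 + (exp (s/2))^2) / exp ((t + s)/2) - (1 + 1/(exp (s/2))^2) * exp ((t + s)/2)) / 2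
       * ((2 * exp (s/2) / exp ((t + s)/2) - 2 / exp (s/2) * exp ((t + s)/2)) / 2)))"
  have hd: "(h has_real_derivative 2 * (exp (s/2) + 1 / exp (s/2)) * A') (at 0)"
    unfolding h_def by (auto intro!: derivative_eq_intros A' B' simp: field_simps power2_eq_square)
  have on_curve: "kform \<gamma> (Phi (s + t * 1) (mat 1 ** (mat 1 + t *\<^sub>R (0 *\<^sub>R e1 + 0 *\<^sub>R e2 + 0 *\<^sub>R e3))))
      (tangent_ws s 0 1 0 0) (tangent_ws s 0 0 0 1) = h t" if t: "\<bar>t\<bar> < s" for t
  proof -
    have st: "s + t > 0" using t by auto
    have "kform \<gamma> (Phi (s + t * 1) (mat 1 ** (mat 1 + t *\<^sub>R (0 *\<^sub>R e1 + 0 *\<^sub>R e2 + 0 *\<^sub>R e3))))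
      (tangent_ws s 0 1 0 0) (tangent_ws s 0 0 0 1)
      = \<gamma> (wpt (s + t)) (Jc (tangent_ws s 0 1 0 0)) (tangent_ws s 0 0 0 1)"
      by (simp add: Phi_def act_id kform_def)
    also have "\<dots> = h t"
      unfolding metric_at_wpt[OF st] h_def
      by (simp add: tangent_ws_explicit Jc_def coord_E1_def coord_JE1_def coord_E2_def coord_JE2_def
          add.commute) (simp add: mult_ac)
    finally show ?thesis .
  qed
  show ?thesis
    unfolding p_def[symmetric]
    by (rule frechet_derivative_along_curve[OF kform_has_derivative[OF p] curve curve0 s on_curve hd])
qed

text \<open>The \<open>d\<Omega>\<close>-term in the direction \<open>X1\<close>; here \<open>dact_inv\<close> multiplies \<open>z\<^sub>j\<close>-components by
  \<open>(t z\<^sub>j + 1)\<^sup>2 / (1 - t\<^sup>2)\<close>.\<close>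
lemma kform_deriv_X1_direction:
  assumes s: "s > 0"
  defines "u \<equiv> exp (s/2)"
  shows "frechet_derivative (\<lambda>q. kform \<gamma> q (tangent_ws s 0 0 0 1) (tangent_ws s 1 0 0 0)) (at (wpt s))
      (tangent_ws s 0 1 0 0) = (u - 1/u) * (alpha_coef \<gamma> s - beta_coef \<gamma> s)"
proof -
  have u: "u > 0" by (simp add: u_def)
  have z: "fst (wpt s) = \<i> * of_real u" "snd (wpt s) = \<i> * of_real (1/u)"
    by (simp_all add: wpt_def u_def exp_minus field_simps)
  let ?Y3 = "tangent_ws s 0 0 0 1" and ?Us = "tangent_ws s 1 0 0 0"
  have det1: "det (mat 1 ** (mat 1 + t *\<^sub>R (1 *\<^sub>R e1 + 0 *\<^sub>R e2 + 0 *\<^sub>R e3))) = 1 - t^2" for t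
    unfolding det_2 mult_one_plus_entries by (simp add: mat_def e1_def e2_def e3_def power2_eq_square)
  have ent1: "(mat 1 ** (mat 1 + t *\<^sub>R (1 *\<^sub>R e1 + 0 *\<^sub>R e2 + 0 *\<^sub>R e3)))$2$1 = t"
    "(mat 1 ** (mat 1 + t *\<^sub>R (1 *\<^sub>R e1 + 0 *\<^sub>R e2 + 0 *\<^sub>R e3)))$2$2 = 1" for t
    unfolding mult_one_plus_entries by (simp_all add: mat_def e1_def e2_def e3_def)
  have "frechet_derivative (\<lambda>q. kform \<gamma> q ?Y3 ?Us) (at (wpt s)) (tangent_ws s 0 1 0 0)
      = kform \<gamma> (wpt s) ?Y3 (2 * fst (wpt s) * fst ?Us, 2 * snd (wpt s) * snd ?Us)
      + kform \<gamma> (wpt s) (2 * fst (wpt s) * fst ?Y3, 2 * snd (wpt s) * snd ?Y3) ?Us"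
  proof (rule kform_deriv_group_direction[OF s, of "1/2" 1 0 0 "\<lambda>w. (w * fst (wpt s) + 1)^2 / (1 - w^2)"
        "\<lambda>w. (w * snd (wpt s) + 1)^2 / (1 - w^2)"])
    fix t :: real assume t: "\<bar>t\<bar> < 1/2"
    then have t2: "t^2 < 1" by (simp add: abs_square_less_1)
    show "det (mat 1 ** (mat 1 + t *\<^sub>R (1 *\<^sub>R e1 + 0 *\<^sub>R e2 + 0 *\<^sub>R e3))) > 0"
      unfolding det1 using t2 by simp
    fix h :: "complex \<times> complex"
    show "dact_inv (mat 1 ** (mat 1 + t *\<^sub>R (1 *\<^sub>R e1 + 0 *\<^sub>R e2 + 0 *\<^sub>R e3))) (wpt s) h =
      (fst h * (\<lambda>w. (w * fst (wpt s) + 1)^2 / (1 - w^2)) (of_real t),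
       snd h * (\<lambda>w. (w * snd (wpt s) + 1)^2 / (1 - w^2)) (of_real t))"
      unfolding dact_inv_def dmob_def den_def det1 ent1 by simp
  next
    show "((\<lambda>w. (w * fst (wpt s) + 1)^2 / (1 - w^2)) has_field_derivative 2 * fst (wpt s)) (at 0)"
      by (auto intro!: derivative_eq_intros)
    show "((\<lambda>w. (w * snd (wpt s) + 1)^2 / (1 - w^2)) has_field_derivative 2 * snd (wpt s)) (at 0)"
      by (auto intro!: derivative_eq_intros)
  qed simp_all
  also have "\<dots> = (u - 1/u) * (alpha_coef \<gamma> s - beta_coef \<gamma> s)"
    unfolding kform_def metric_at_wpt[OF s] u_def[symmetric] z
    using u by (simp add: tangent_ws_explicit u_def[symmetric] Jc_def coord_E1_def coord_JE1_def
        coord_E2_def coord_JE2_def field_simps)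
  finally show ?thesis .
qed

text \<open>The \<open>d\<Omega>\<close>-term in the direction \<open>X3\<close> vanishes; here \<open>dact_inv\<close> multiplies both
  components by \<open>(1 - t) / (1 + t)\<close>.\<close>
lemma kform_deriv_X3_direction:
  assumes s: "s > 0"
  shows "frechet_derivative (\<lambda>q. kform \<gamma> q (tangent_ws s 1 0 0 0) (tangent_ws s 0 1 0 0)) (at (wpt s))
      (tangent_ws s 0 0 0 1) = 0"
proof -
  define u where "u = exp (s/2)"
  have u: "u > 0" by (simp add: u_def)
  let ?Y1 = "tangent_ws s 0 1 0 0" and ?Us = "tangent_ws s 1 0 0 0"
  have det3: "det (mat 1 ** (mat 1 + t *\<^sub>R (0 *\<^sub>R e1 + 0 *\<^sub>R e2 + 1 *\<^sub>R e3))) = (1 + t) * (1 - t)" for t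
    unfolding det_2 mult_one_plus_entries by (simp add: mat_def e1_def e2_def e3_def algebra_simps)
  have ent3: "(mat 1 ** (mat 1 + t *\<^sub>R (0 *\<^sub>R e1 + 0 *\<^sub>R e2 + 1 *\<^sub>R e3)))$2$1 = 0"
    "(mat 1 ** (mat 1 + t *\<^sub>R (0 *\<^sub>R e1 + 0 *\<^sub>R e2 + 1 *\<^sub>R e3)))$2$2 = 1 - t" for t
    unfolding mult_one_plus_entries by (simp_all add: mat_def e1_def e2_def e3_def)
  have "frechet_derivative (\<lambda>q. kform \<gamma> q ?Us ?Y1) (at (wpt s)) (tangent_ws s 0 0 0 1)
      = kform \<gamma> (wpt s) ?Us (-2 * fst ?Y1, -2 * snd ?Y1) + kform \<gamma> (wpt s) (-2 * fst ?Us, -2 * snd ?Us) ?Y1"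
  proof (rule kform_deriv_group_direction[OF s, of "1/2" 0 0 1 "\<lambda>w. (1 - w) / (1 + w)" "\<lambda>w. (1 - w) / (1 + w)"])
    fix t :: real assume t: "\<bar>t\<bar> < 1/2"
    then have t1: "1 - t > 0" "1 + t > 0" by auto
    show "det (mat 1 ** (mat 1 + t *\<^sub>R (0 *\<^sub>R e1 + 0 *\<^sub>R e2 + 1 *\<^sub>R e3))) > 0"
      unfolding det3 using t1 by simp
    fix h :: "complex \<times> complex"
    have nz: "1 - complex_of_real t \<noteq> 0" "1 + complex_of_real t \<noteq> 0"
      using t1 by (auto simp: complex_eq_iff)
    have "dmob (mat 1 ** (mat 1 + t *\<^sub>R (0 *\<^sub>R e1 + 0 *\<^sub>R e2 + 1 *\<^sub>R e3))) z
        = (1 + of_real t) / (1 - of_real t)" for z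
      unfolding dmob_def den_def det3 ent3 using nz by (simp add: power2_eq_square)
    then show "dact_inv (mat 1 ** (mat 1 + t *\<^sub>R (0 *\<^sub>R e1 + 0 *\<^sub>R e2 + 1 *\<^sub>R e3))) (wpt s) h =
      (fst h * (\<lambda>w. (1 - w) / (1 + w)) (of_real t), snd h * (\<lambda>w. (1 - w) / (1 + w)) (of_real t))"
      unfolding dact_inv_def by simp
  next
    show "((\<lambda>w. (1 - w) / (1 + w)) has_field_derivative -2) (at 0)"
      by (auto intro!: derivative_eq_intros)
    show "((\<lambda>w. (1 - w) / (1 + w)) has_field_derivative -2) (at 0)"
      by (auto intro!: derivative_eq_intros)
  qed simp_all
  also have "\<dots> = 0"
    unfolding kform_def metric_at_wpt[OF s] u_def[symmetric]
    using u by (simp add: tangent_ws_explicit u_def[symmetric] Jc_def coord_E1_def coord_JE1_def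
        coord_E2_def coord_JE2_def field_simps) algebra
  finally show ?thesis .
qed

text \<open>\<open>d\<Omega>(\<partial>\<^sub>s, X1, X3) = 0\<close> at \<open>w\<^sub>s\<close> is the ODE relating \<open>\<alpha>'\<close> to \<open>\<alpha> - \<beta>\<close>.\<close>
lemma kaehler_ode:
  assumes s: "s > 0"
    and A: "(alpha_coef \<gamma> has_real_derivative A') (at s)"
    and B: "(beta_coef \<gamma> has_real_derivative B') (at s)"
  shows "2 * (exp (s/2) + 1 / exp (s/2)) * A'
       + (exp (s/2) - 1 / exp (s/2)) * (alpha_coef \<gamma> s - beta_coef \<gamma> s) = 0"
proof -
  have "0 = d2form (kform \<gamma>) (wpt s) (tangent_ws s 1 0 0 0) (tangent_ws s 0 1 0 0) (tangent_ws s 0 0 0 1)"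
    using kform_closed[OF wpt_M2[OF s]] by simp
  also have "\<dots> = 2 * (exp (s/2) + 1 / exp (s/2)) * A'
       + (exp (s/2) - 1 / exp (s/2)) * (alpha_coef \<gamma> s - beta_coef \<gamma> s)"
    unfolding d2form_def kform_deriv_s_direction[OF s A B] kform_deriv_X1_direction[OF s]
      kform_deriv_X3_direction[OF s] by simp
  finally show ?thesis by simp
qed

lemma alpha_beta_expand:
  assumes x: "x > 0"
  shows "alpha_coef \<gamma> x = exp (1 * x) * \<gamma> (wpt x) (1,0) (1,0) + \<gamma> (wpt x) (1,0) (0,1)
           + \<gamma> (wpt x) (0,1) (1,0) + exp ((-1) * x) * \<gamma> (wpt x) (0,1) (0,1)"
    and "beta_coef \<gamma> x = exp (1 * x) * \<gamma> (wpt x) (1,0) (1,0) + (- \<gamma> (wpt x) (1,0) (0,1))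
           + (- \<gamma> (wpt x) (0,1) (1,0)) + exp ((-1) * x) * \<gamma> (wpt x) (0,1) (0,1)"
proof -
  define u where "u = exp (x/2)"
  have u: "u > 0" by (simp add: u_def)
  note B = metric_bilinear[OF wpt_M2[OF x]]
  have e1: "E1 u = u *\<^sub>R (1,0) + (1/u) *\<^sub>R (0,1)"
    by (simp add: E1_def scaleR_conv_of_real)
  have e2: "E2 u = u *\<^sub>R (1,0) + (- (1/u)) *\<^sub>R (0,1)"
    by (simp add: E2_def scaleR_conv_of_real)
  have uu1: "u * u = exp (1 * x)" by (simp add: u_def flip: exp_add)
  have "exp ((-1) * x) = 1 / exp (1 * x)" by (simp add: exp_minus inverse_eq_divide)
  then have uu2: "1/u * (1/u) = exp ((-1) * x)" using uu1 by simp
  note uu = uu1 uu2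
  show "alpha_coef \<gamma> x = exp (1 * x) * \<gamma> (wpt x) (1,0) (1,0) + \<gamma> (wpt x) (1,0) (0,1)
           + \<gamma> (wpt x) (0,1) (1,0) + exp ((-1) * x) * \<gamma> (wpt x) (0,1) (0,1)"
    unfolding alpha_coef_def u_def[symmetric] e1 uu[symmetric]
      bilinear_ladd[OF B] bilinear_radd[OF B] bilinear_lmul[OF B] bilinear_rmul[OF B]
    using u by (simp add: field_simps)
  show "beta_coef \<gamma> x = exp (1 * x) * \<gamma> (wpt x) (1,0) (1,0) + (- \<gamma> (wpt x) (1,0) (0,1))
           + (- \<gamma> (wpt x) (0,1) (1,0)) + exp ((-1) * x) * \<gamma> (wpt x) (0,1) (0,1)"
    unfolding beta_coef_def u_def[symmetric] e2 uu[symmetric]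
      bilinear_ladd[OF B] bilinear_radd[OF B] bilinear_lmul[OF B] bilinear_rmul[OF B]
    using u by (simp add: field_simps)
qed

lemma alpha_smooth: "Ck_on k {0<..} (alpha_coef \<gamma>)"
proof -
  have "Ck_on k {0<..} (\<lambda>x. exp (1 * x) * \<gamma> (wpt x) (1,0) (1,0) + \<gamma> (wpt x) (1,0) (0,1)
           + \<gamma> (wpt x) (0,1) (1,0) + exp ((-1) * x) * \<gamma> (wpt x) (0,1) (0,1))" (is "Ck_on _ _ ?f")
    by (intro Ck_add Ck_mult Ck_exp metric_smooth_along_wpt Basis_pairs open_greaterThan)
  moreover have "Ck_on k {0<..} (alpha_coef \<gamma>) = Ck_on k {0<..} ?f"
    by (rule Ck_on_cong[OF open_greaterThan]) (simp add: alpha_beta_expand(1))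
  ultimately show ?thesis by simp
qed

lemma beta_smooth: "Ck_on k {0<..} (beta_coef \<gamma>)"
proof -
  have "Ck_on k {0<..} (\<lambda>x. exp (1 * x) * \<gamma> (wpt x) (1,0) (1,0) + (- \<gamma> (wpt x) (1,0) (0,1))
           + (- \<gamma> (wpt x) (0,1) (1,0)) + exp ((-1) * x) * \<gamma> (wpt x) (0,1) (0,1))"
    (is "Ck_on _ _ ?f")
    by (intro Ck_add Ck_mult Ck_exp Ck_neg metric_smooth_along_wpt Basis_pairs open_greaterThan)
  moreover have "Ck_on k {0<..} (beta_coef \<gamma>) = Ck_on k {0<..} ?f"
    by (rule Ck_on_cong[OF open_greaterThan]) (simp add: alpha_beta_expand(2))
  ultimately show ?thesis by simp
qed

lemma potential_smooth: "smooth_on {0<..} (potential \<gamma>)"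
proof -
  have eq: "potential \<gamma> = (\<lambda>x. (exp (1 * x) + 2 + exp ((-1) * x)) * alpha_coef \<gamma> x)"
    by (rule ext) (simp add: potential_def cosh_half_squared)
  show ?thesis
    unfolding smooth_on_def eq
    by (intro allI Ck_mult Ck_add Ck_exp Ck_const alpha_smooth open_greaterThan)
qed

text \<open>The ODE of \<open>kaehler_ode\<close>, rewritten for the potential.\<close>
lemma potential_over_cosh_deriv:
  assumes s: "s > 0"
  shows "deriv (\<lambda>x. potential \<gamma> x / cosh (x/2)) s = 2 * sinh (s/2) * beta_coef \<gamma> s"
proof -
  define \<alpha>' where "\<alpha>' = deriv (alpha_coef \<gamma>) s"
  have hA: "(alpha_coef \<gamma> has_real_derivative \<alpha>') (at s)"
    unfolding \<alpha>'_def using Ck_on_has_real_derivative[OF _ alpha_smooth] s by simp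
  have hB: "(beta_coef \<gamma> has_real_derivative deriv (beta_coef \<gamma>) s) (at s)"
    using Ck_on_has_real_derivative[OF _ beta_smooth] s by simp
  have hyperbolic: "4 * cosh (s/2) = 2 * (exp (s/2) + 1 / exp (s/2))"
    "2 * sinh (s/2) = exp (s/2) - 1 / exp (s/2)"
    by (simp_all add: cosh_half sinh_half)
  have ode: "4 * cosh (s/2) * \<alpha>' + 2 * sinh (s/2) * (alpha_coef \<gamma> s - beta_coef \<gamma> s) = 0"
    unfolding hyperbolic by (rule kaehler_ode[OF s hA hB])
  have "(\<lambda>x. potential \<gamma> x / cosh (x/2)) = (\<lambda>x. 4 * cosh (x/2) * alpha_coef \<gamma> x)"
    by (rule ext) (simp add: potential_def power2_eq_square)
  moreover have "((\<lambda>x. 4 * cosh (x/2) * alpha_coef \<gamma> x) has_real_derivative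
      4 * (sinh (s/2) * (1/2)) * alpha_coef \<gamma> s + 4 * cosh (s/2) * \<alpha>') (at s)"
    by (auto intro!: derivative_eq_intros hA)
  ultimately have "deriv (\<lambda>x. potential \<gamma> x / cosh (x/2)) s
      = 2 * sinh (s/2) * alpha_coef \<gamma> s + 4 * cosh (s/2) * \<alpha>'"
    using DERIV_imp_deriv by fastforce
  then show ?thesis using ode by (simp add: algebra_simps)
qed

lemma metric_on_dPhi:
  assumes s: "s > 0" and M: "det M > 0"
  shows "\<gamma> (Phi s M) (dPhi s M tau a b c) (dPhi s M tau' a' b' c')
       = alpha_coef \<gamma> s * (4 * (cosh (s/2))^2 * a * a' + 4 * c * c')
       + beta_coef \<gamma> s * (4 * (sinh (s/2))^2 * b * b' + tau * tau' / 4)"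
proof -
  define u where "u = exp (s/2)"
  have u: "u > 0" by (simp add: u_def)
  have "\<gamma> (Phi s M) (dPhi s M tau a b c) (dPhi s M tau' a' b' c')
      = \<gamma> (wpt s) (tangent_ws s tau a b c) (tangent_ws s tau' a' b' c')"
    unfolding Phi_def dPhi_eq[OF M] by (rule G_invariant_dact[OF G M wpt_M2[OF s]])
  also have "\<dots> = alpha_coef \<gamma> s * (a * (u + 1/u) * (a' * (u + 1/u)) + 2 * c * (2 * c'))
      + beta_coef \<gamma> s * (b * (1/u - u) * (b' * (1/u - u)) + tau / 2 * (tau' / 2))"
    unfolding metric_at_wpt[OF s] tangent_ws_coords u_def ..
  also have "\<dots> = alpha_coef \<gamma> s * (4 * (cosh (s/2))^2 * a * a' + 4 * c * c')
       + beta_coef \<gamma> s * (4 * (sinh (s/2))^2 * b * b' + tau * tau' / 4)"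
    unfolding sinh_half cosh_half u_def[symmetric] using u by (simp add: power2_eq_square field_simps)
  finally show ?thesis .
qed

end

theorem proposition3p1:
  fixes \<gamma> :: "complex \<times> complex \<Rightarrow> complex \<times> complex \<Rightarrow> complex \<times> complex \<Rightarrow> real"
  assumes "kaehler_metric M2 \<gamma>"
    and "G_invariant \<gamma>"
  shows "\<exists>A :: real \<Rightarrow> real. smooth_on {0<..} A \<and>
    (\<forall>s>0. \<forall>M::real^2^2. det M = 1 \<longrightarrow>
      (\<forall>tau a b c tau' a' b' c'.
        \<gamma> (Phi s M) (dPhi s M tau a b c) (dPhi s M tau' a' b' c') =
            (1 / (8 * sinh (s/2)) * deriv (\<lambda>x. A x / cosh (x/2)) s) * tau * tau'
          + A s * a * a'
          + (2 * sinh (s/2) * deriv (\<lambda>x. A x / cosh (x/2)) s) * b * b'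
          + (A s / (cosh (s/2))^2) * c * c'))"
proof -
  interpret invariant_kaehler \<gamma> using assms by (rule invariant_kaehler.intro)
  show ?thesis
  proof (intro exI conjI allI impI)
    show "smooth_on {0<..} (potential \<gamma>)" by (rule potential_smooth)
    fix s :: real and M :: "real^2^2" and tau a b c tau' a' b' c' :: real
    assume s: "s > 0" and M: "det M = 1"
    have M_pos: "det M > 0" using M by simp
    have sinh_pos: "sinh (s/2) > 0" using s by simp
    have cosh_pos: "cosh (s/2) > 0" by (rule cosh_real_pos)
    show "\<gamma> (Phi s M) (dPhi s M tau a b c) (dPhi s M tau' a' b' c') =
            (1 / (8 * sinh (s/2)) * deriv (\<lambda>x. potential \<gamma> x / cosh (x/2)) s) * tau * tau'
          + potential \<gamma> s * a * a'
          + (2 * sinh (s/2) * deriv (\<lambda>x. potential \<gamma> x / cosh (x/2)) s) * b * b'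
          + (potential \<gamma> s / (cosh (s/2))^2) * c * c'"
      unfolding metric_on_dPhi[OF s M_pos] potential_over_cosh_deriv[OF s] potential_def[of \<gamma> s]
      using sinh_pos cosh_pos by (simp add: field_simps power2_eq_square)
  qed
qed

end
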